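(* For each integer $n \ge 3$, define $D_{a,n} = \overline{D}(1 + 5\cdot 2^{2n}, 2^{-(2n+3)})$ and $D_{b,n} = \overline{D}(1+7\cdot 2^{2n}, 2^{-(2n+3)})$. If $t \in \mathbb{Q}_2$ lies in $D_{a,n}$ or in $D_{b,n}$ for some $n \ge 3$, then $f_t$ is post-critically bounded. Equivalently, the forward orbit of $1$ under $f_t$ is bounded.
   Context: Let $|\cdot|$ denote the $2$-adic absolute value on $\mathbb{C}_2$, normalized by $|2| = 1/2$. The notation $\overline{D}(a,\delta)$ denotes the closed disk $\{z \in \mathbb{C}_2 : |z-a| \le \delta\}$. For $t \in \mathbb{C}_2$, let $f_t(z) = -\tfrac32 t(-2z^3+3z^2)+1$. Its critical points are $0$ and $1$, and $f_t(0)=1$. Post-critically bounded means that both critical points have bounded forward orbits. *)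

theory Defs
  imports "HOL-Computational_Algebra.Computational_Algebra"
begin

definition val2 :: "rat \<Rightarrow> int" where
  "val2 q = (let (a, b) = quotient_of q in
              int (multiplicity (2::int) a) - int (multiplicity (2::int) b))"

definition abs2 :: "rat \<Rightarrow> real" where
  "abs2 q = (if q = 0 then 0 else 2 powr (- real_of_int (val2 q)))"

(* Q_2 is realised as the completion of Q: an element of Q_2 is represented by
   a 2-adically Cauchy sequence of rationals (every element of Q_2 arises so). *)
definition cauchy2 :: "(nat \<Rightarrow> rat) \<Rightarrow> bool" where
  "cauchy2 X \<longleftrightarrow> (\<forall>e>0. \<exists>N. \<forall>m\<ge>N. \<forall>n\<ge>N. abs2 (X m - X n) < e)"

definition qnorm :: "(nat \<Rightarrow> rat) \<Rightarrow> real" where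
  "qnorm X = lim (\<lambda>n. abs2 (X n))"

definition fmap :: "rat \<Rightarrow> rat \<Rightarrow> rat" where
  "fmap t z = - (3/2) * t * (- 2 * z ^ 3 + 3 * z ^ 2) + 1"

(* k-th orbit point f_t^k(z0), as a Cauchy sequence (f_t is polynomial, hence
   2-adically continuous, so it may be applied termwise) *)
definition orbit_pt :: "(nat \<Rightarrow> rat) \<Rightarrow> rat \<Rightarrow> nat \<Rightarrow> nat \<Rightarrow> rat" where
  "orbit_pt T z0 k = (\<lambda>n. (fmap (T n) ^^ k) z0)"

definition bounded_orbit :: "(nat \<Rightarrow> rat) \<Rightarrow> rat \<Rightarrow> bool" where
  "bounded_orbit T z0 \<longleftrightarrow> (\<exists>M. \<forall>k. qnorm (orbit_pt T z0 k) \<le> M)"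

(* critical points of f_t are 0 and 1 *)
definition post_crit_bounded :: "(nat \<Rightarrow> rat) \<Rightarrow> bool" where
  "post_crit_bounded T \<longleftrightarrow> bounded_orbit T 0 \<and> bounded_orbit T 1"

end

theory Submission
  imports Defs
begin

(* Write t = 1 + 4^n a. The hypothesis says exactly that a \<equiv> 5 or 7 (mod 8) in the 2-adic
   integers. The point -1/2 is fixed by f_1 and f_t(-1/2 + h) = -1/2 - 3/2 (t - 1) + 27/4 t h + O(h^2),
   so for 2 \<le> k \<le> n the orbit of 1 has the form f_t^k(1) = -1/2 + 2 4^(n-k) e_k with
   e_(k+1) \<equiv> 3 e_k (mod 8); hence e_k stays in the classes 5, 7 mod 8. At k = n the orbit
   therefore enters the union of the disks 2 + 4Z_2, 3 + 4Z_2, 19/2 + 16Z_2, 27/2 + 16Z_2, which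
   f_t maps into itself because t \<equiv> 1 (mod 32). So |f_t^k(1)| \<le> 2 for all k, and f_t(0) = 1.
   For t \<in> Q_2 given by a Cauchy sequence the orbit points are Cauchy limits of the rational
   orbits (f_t is a polynomial), and by discreteness of |.| the rational parameters eventually lie
   in the same disk, so the bound passes to the limit. *)

section \<open>Rationals that are 2-adic integers\<close>

definition Z2 :: "rat set" where
  "Z2 = {of_int a / of_int b | a b. odd b}"

lemma Z2_of_int [simp]: "of_int a \<in> Z2"
  unfolding Z2_def by (rule CollectI, rule exI[of _ a], rule exI[of _ 1]) simp

lemma Z2_numeral [simp]: "numeral k \<in> Z2" "0 \<in> Z2" "1 \<in> Z2"
  using Z2_of_int[of "numeral k"] Z2_of_int[of 0] Z2_of_int[of 1] by simp_all

lemma Z2_add [intro]: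
  assumes "x \<in> Z2" "y \<in> Z2" shows "x + y \<in> Z2"
proof -
  obtain a b c d where "odd b" "x = of_int a / of_int b" "odd d" "y = of_int c / of_int d"
    using assms unfolding Z2_def by blast
  moreover have "b \<noteq> 0" "d \<noteq> 0" using \<open>odd b\<close> \<open>odd d\<close> by auto
  ultimately have "x + y = of_int (a * d + c * b) / of_int (b * d)" "odd (b * d)"
    by (simp_all add: field_simps)
  then show ?thesis unfolding Z2_def by blast
qed

lemma Z2_mult [intro]:
  assumes "x \<in> Z2" "y \<in> Z2" shows "x * y \<in> Z2"
proof -
  obtain a b c d where "odd b" "x = of_int a / of_int b" "odd d" "y = of_int c / of_int d"
    using assms unfolding Z2_def by blast
  then have "x * y = of_int (a * c) / of_int (b * d)" "odd (b * d)" by auto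
  then show ?thesis unfolding Z2_def by blast
qed

lemma Z2_minus [intro]: "x \<in> Z2 \<Longrightarrow> - x \<in> Z2"
  using Z2_mult[of "-1" x] Z2_of_int[of "-1"] by simp

lemma Z2_diff [intro]: "x \<in> Z2 \<Longrightarrow> y \<in> Z2 \<Longrightarrow> x - y \<in> Z2"
  using Z2_add[of x "- y"] by auto

lemma Z2_power [intro]: "x \<in> Z2 \<Longrightarrow> x ^ k \<in> Z2"
  by (induction k) auto

lemmas Z2_intros = Z2_add Z2_mult Z2_minus Z2_diff Z2_power Z2_numeral

lemma Z2_parityE:
  assumes "y \<in> Z2"
  obtains (even) w where "w \<in> Z2" "y = 2 * w" | (odd) w where "w \<in> Z2" "y = 1 + 2 * w"
proof -
  obtain a b where b: "odd b" and y: "y = of_int a / of_int b"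
    using assms unfolding Z2_def by blast
  then have "b \<noteq> 0" by auto
  show ?thesis
  proof (cases "even a")
    case True
    then obtain c where "a = 2 * c" by blast
    then have "y = 2 * (of_int c / of_int b)" using y by simp
    then show ?thesis using b that(1) unfolding Z2_def by blast
  next
    case False
    then have "even (a - b)" using b by simp
    then obtain c where "a = b + 2 * c" by (metis add_diff_cancel_left' add_diff_eq evenE)
    then have "y = 1 + 2 * (of_int c / of_int b)" using y \<open>b \<noteq> 0\<close> by (simp add: field_simps)
    then show ?thesis using b that(2) unfolding Z2_def by blast
  qed
qed

section \<open>The 2-adic valuation and absolute value\<close>

lemma val2_repr:
  assumes "odd a" "odd b"
  shows "val2 (of_int (2 ^ i * a) / of_int (2 ^ j * b)) = int i - int j"
proof -
  define q where "q = (of_int (2 ^ i * a) / of_int (2 ^ j * b) :: rat)"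
  obtain p1 p2 where qo: "quotient_of q = (p1, p2)" by (cases "quotient_of q")
  have p2: "p2 > 0" using quotient_of_denom_pos[OF qo] .
  have "a \<noteq> 0" "b \<noteq> 0" using assms by auto
  then have "of_int p1 * of_int (2 ^ j * b) = (of_int (2 ^ i * a) * of_int p2 :: rat)"
    using quotient_of_div[OF qo] p2 unfolding q_def by (simp add: field_simps)
  then have eq: "p1 * (2 ^ j * b) = 2 ^ i * a * p2"
    by (metis of_int_eq_iff of_int_mult)
  then have "p1 \<noteq> 0" using \<open>a \<noteq> 0\<close> p2 by auto
  have multiplicity_odd: "multiplicity (2::int) c = 0" if "odd c" for c
    using that by (simp add: not_dvd_imp_multiplicity_0)
  have "multiplicity 2 (p1 * (2 ^ j * b)) = multiplicity 2 p1 + j"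
    "multiplicity (2::int) (2 ^ i * a * p2) = i + multiplicity 2 p2"
    using \<open>p1 \<noteq> 0\<close> \<open>a \<noteq> 0\<close> \<open>b \<noteq> 0\<close> p2 assms
    by (simp_all add: prime_elem_multiplicity_mult_distrib multiplicity_prime_power multiplicity_odd)
  with eq have "multiplicity 2 p1 + j = i + multiplicity (2::int) p2" by simp
  then show ?thesis unfolding val2_def q_def[symmetric] qo by simp
qed

lemma rat_two_adic_decomp:
  fixes q :: rat
  assumes "q \<noteq> 0"
  obtains i j a b where "odd a" "odd b" "q = of_int (2 ^ i * a) / of_int (2 ^ j * b)"
proof -
  obtain p1 p2 where qo: "quotient_of q = (p1, p2)" by (cases "quotient_of q")
  have p2: "p2 > 0" and q: "q = of_int p1 / of_int p2"
    using quotient_of_denom_pos[OF qo] quotient_of_div[OF qo] .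
  then have "p1 \<noteq> 0" using assms by auto
  obtain a where "p1 = 2 ^ multiplicity 2 p1 * a" "\<not> 2 dvd a"
    using multiplicity_decompose'[of p1 2] \<open>p1 \<noteq> 0\<close> by auto
  moreover obtain b where "p2 = 2 ^ multiplicity 2 p2 * b" "\<not> 2 dvd b"
    using multiplicity_decompose'[of p2 2] p2 by auto
  ultimately show ?thesis using that[of a b "multiplicity 2 p1" "multiplicity 2 p2"] q by simp
qed

lemma val2_mult:
  assumes "x \<noteq> 0" "y \<noteq> 0"
  shows "val2 (x * y) = val2 x + val2 y"
proof -
  obtain i j a b where ab: "odd a" "odd b" "x = of_int (2 ^ i * a) / of_int (2 ^ j * b)"
    using rat_two_adic_decomp[OF assms(1)] .
  obtain i' j' a' b' where ab': "odd a'" "odd b'" "y = of_int (2 ^ i' * a') / of_int (2 ^ j' * b')"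
    using rat_two_adic_decomp[OF assms(2)] .
  have xy: "x * y = of_int (2 ^ (i + i') * (a * a')) / of_int (2 ^ (j + j') * (b * b'))"
    using ab ab' by (simp add: power_add mult_ac)
  have "val2 (x * y) = int (i + i') - int (j + j')"
    unfolding xy by (rule val2_repr) (use ab ab' in simp_all)
  moreover have "val2 x = int i - int j" "val2 y = int i' - int j'"
    unfolding ab(3) ab'(3) by (rule val2_repr[OF ab(1,2)], rule val2_repr[OF ab'(1,2)])
  ultimately show ?thesis by simp
qed

lemma val2_power_int_2 [simp]: "val2 (2 powi k) = k"
proof (cases "k \<ge> 0")
  case True
  have "(2::rat) powi k = of_int (2 ^ nat k * 1) / of_int (2 ^ 0 * 1)"
    using True by (simp add: power_int_def)
  then have "val2 (2 powi k) = int (nat k) - int 0" by (simp only: val2_repr odd_one not_False_eq_True)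
  then show ?thesis using True by simp
next
  case False
  have "(2::rat) powi k = of_int (2 ^ 0 * 1) / of_int (2 ^ nat (- k) * 1)"
    using False by (simp add: power_int_def field_simps)
  then have "val2 (2 powi k) = int 0 - int (nat (- k))" by (simp only: val2_repr odd_one not_False_eq_True)
  then show ?thesis using False by simp
qed

lemma Z2_iff_val2: "q \<in> Z2 \<longleftrightarrow> q = 0 \<or> 0 \<le> val2 q"
proof
  assume "q \<in> Z2"
  then obtain c d where cd: "odd d" "q = of_int c / of_int d" unfolding Z2_def by blast
  show "q = 0 \<or> 0 \<le> val2 q"
  proof (cases "c = 0")
    case False
    obtain a where a: "c = 2 ^ multiplicity 2 c * a" "\<not> 2 dvd a"
      using multiplicity_decompose'[of c 2] False by auto
    have "q = of_int (2 ^ multiplicity 2 c * a) / of_int (2 ^ 0 * d)" using cd(2) by (simp flip: a(1))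
    then have "val2 q = int (multiplicity 2 c) - int 0"
      by (simp only: val2_repr[OF a(2) cd(1)])
    then show ?thesis by simp
  qed (use cd in simp)
next
  assume h: "q = 0 \<or> 0 \<le> val2 q"
  show "q \<in> Z2"
  proof (cases "q = 0")
    case False
    obtain i j a b where r: "odd a" "odd b" "q = of_int (2 ^ i * a) / of_int (2 ^ j * b)"
      using rat_two_adic_decomp[OF False] .
    then have "val2 q = int i - int j" using val2_repr by simp
    then have "j \<le> i" using h False by simp
    then have "(2::int) ^ i = 2 ^ (i - j) * 2 ^ j" by (simp flip: power_add)
    then have "q = of_int (2 ^ (i - j) * a) / of_int b" using r by (simp add: field_simps)
    then show ?thesis using r unfolding Z2_def by blast
  qed simp
qed

lemma abs2_nonneg: "0 \<le> abs2 q"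
  unfolding abs2_def by simp

lemma abs2_zero [simp]: "abs2 0 = 0"
  unfolding abs2_def by simp

lemma abs2_le_iff_Z2: "abs2 q \<le> 2 powr (- of_int j) \<longleftrightarrow> q * 2 powi (- j) \<in> Z2"
  by (cases "q = 0") (simp_all add: abs2_def Z2_iff_val2 val2_mult)

lemma abs2_le_2_iff: "abs2 z \<le> 2 \<longleftrightarrow> 2 * z \<in> Z2"
  using abs2_le_iff_Z2[of z "-1"] by (simp add: mult.commute)

lemma abs2_mult: "abs2 (x * y) = abs2 x * abs2 y"
  by (cases "x = 0 \<or> y = 0") (auto simp: abs2_def val2_mult powr_add[symmetric])

lemma abs2_minus [simp]: "abs2 (- x) = abs2 x"
proof -
  have "val2 (-1) = int 0 - int 0"
    using val2_repr[of "-1" 1 0 0] by simp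
  then show ?thesis using abs2_mult[of "-1" x] by (simp add: abs2_def)
qed

lemma abs2_minus_commute: "abs2 (x - y) = abs2 (y - x)"
  using abs2_minus[of "y - x"] by simp

lemma abs2_ultrametric: "abs2 (x + y) \<le> max (abs2 x) (abs2 y)"
proof -
  have *: "abs2 (x + y) \<le> abs2 x" if "abs2 y \<le> abs2 x" for x y
  proof (cases "x = 0")
    case False
    then have x: "abs2 x = 2 powr (- of_int (val2 x))" by (simp add: abs2_def)
    then have "x * 2 powi (- val2 x) \<in> Z2" "y * 2 powi (- val2 x) \<in> Z2"
      using that abs2_le_iff_Z2[of x "val2 x"] abs2_le_iff_Z2[of y "val2 x"] by simp_all
    then have "(x + y) * 2 powi (- val2 x) \<in> Z2" by (simp add: distrib_right Z2_add)
    then show ?thesis unfolding x abs2_le_iff_Z2 .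
  qed (use that abs2_nonneg[of y] in simp)
  show ?thesis using *[of y x] *[of x y] by (cases "abs2 y \<le> abs2 x") (simp_all add: add.commute)
qed

lemma abs2_diff_abs2_le: "\<bar>abs2 x - abs2 y\<bar> \<le> abs2 (x - y)"
proof -
  have "abs2 x \<le> abs2 y + abs2 (x - y)" "abs2 y \<le> abs2 x + abs2 (y - x)"
    using abs2_ultrametric[of y "x - y"] abs2_ultrametric[of x "y - x"]
      abs2_nonneg[of x] abs2_nonneg[of y] abs2_nonneg[of "x - y"] abs2_nonneg[of "y - x"]
    by auto
  then show ?thesis using abs2_minus_commute[of x y] by linarith
qed

lemma abs2_le_of_less_double:
  assumes "abs2 q < 2 powr (1 - of_int j)"
  shows "abs2 q \<le> 2 powr (- of_int j)"
proof (cases "q = 0")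
  case False
  then have "- real_of_int (val2 q) < 1 - of_int j" using assms by (simp add: abs2_def)
  then show ?thesis using False by (simp add: abs2_def)
qed simp

section \<open>Cauchy sequences and their norms\<close>

lemma cauchy2_const: "cauchy2 (\<lambda>m. c)"
  unfolding cauchy2_def by simp

lemma cauchy2_add:
  assumes "cauchy2 X" "cauchy2 Y"
  shows "cauchy2 (\<lambda>m. X m + Y m)"
  unfolding cauchy2_def
proof (intro allI impI)
  fix e :: real assume "e > 0"
  then obtain N1 N2 where "\<forall>m\<ge>N1. \<forall>n\<ge>N1. abs2 (X m - X n) < e" "\<forall>m\<ge>N2. \<forall>n\<ge>N2. abs2 (Y m - Y n) < e"
    using assms unfolding cauchy2_def by meson
  moreover have "abs2 ((X m + Y m) - (X n + Y n)) \<le> max (abs2 (X m - X n)) (abs2 (Y m - Y n))" for m n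
    using abs2_ultrametric[of "X m - X n" "Y m - Y n"] by (simp add: algebra_simps)
  ultimately have "abs2 ((X m + Y m) - (X n + Y n)) < e" if "m \<ge> max N1 N2" "n \<ge> max N1 N2" for m n
    using that by (meson max.bounded_iff max_less_iff_conj le_less_trans)
  then show "\<exists>N. \<forall>m\<ge>N. \<forall>n\<ge>N. abs2 ((X m + Y m) - (X n + Y n)) < e" by blast
qed

lemma cauchy2_minus: "cauchy2 X \<Longrightarrow> cauchy2 (\<lambda>m. - X m)"
  unfolding cauchy2_def minus_diff_minus abs2_minus .

lemma cauchy2_diff: "cauchy2 X \<Longrightarrow> cauchy2 Y \<Longrightarrow> cauchy2 (\<lambda>m. X m - Y m)"
  using cauchy2_add[of X "\<lambda>m. - Y m"] cauchy2_minus[of Y] by simp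

lemma cauchy2_eventually_bounded:
  assumes "cauchy2 X"
  obtains B N where "B > 0" "\<forall>m\<ge>N. abs2 (X m) \<le> B"
proof -
  obtain N where N: "\<forall>m\<ge>N. abs2 (X m - X N) < 1"
    using assms unfolding cauchy2_def by (meson order_refl zero_less_one)
  have "abs2 (X m) \<le> max 1 (abs2 (X N))" if "m \<ge> N" for m
    using abs2_ultrametric[of "X N" "X m - X N"] N that by fastforce
  then show ?thesis using that[of "max 1 (abs2 (X N))" N] by fastforce
qed

lemma cauchy2_mult:
  assumes "cauchy2 X" "cauchy2 Y"
  shows "cauchy2 (\<lambda>m. X m * Y m)"
  unfolding cauchy2_def
proof (intro allI impI)
  fix e :: real assume "e > 0"
  obtain Bx Nx where Bx: "Bx > 0" "\<forall>m\<ge>Nx. abs2 (X m) \<le> Bx"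
    using cauchy2_eventually_bounded[OF assms(1)] .
  obtain By Ny where By: "By > 0" "\<forall>m\<ge>Ny. abs2 (Y m) \<le> By"
    using cauchy2_eventually_bounded[OF assms(2)] .
  have "e / By > 0" "e / Bx > 0" using \<open>e > 0\<close> Bx(1) By(1) by simp_all
  then obtain N1 N2 where N1: "\<forall>m\<ge>N1. \<forall>n\<ge>N1. abs2 (X m - X n) < e / By"
    and N2: "\<forall>m\<ge>N2. \<forall>n\<ge>N2. abs2 (Y m - Y n) < e / Bx"
    using assms unfolding cauchy2_def by meson
  define N where "N = max (max Nx Ny) (max N1 N2)"
  have "abs2 (X m * Y m - X n * Y n) < e" if "m \<ge> N" "n \<ge> N" for m n
  proof -
    have "abs2 (X m * (Y m - Y n)) < e"
    proof -
      have "abs2 (X m * (Y m - Y n)) \<le> Bx * abs2 (Y m - Y n)"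
        using Bx that abs2_nonneg unfolding abs2_mult N_def by (simp add: mult_right_mono)
      also have "\<dots> < e"
        using N2 that Bx(1) unfolding N_def by (simp add: pos_less_divide_eq mult.commute)
      finally show ?thesis .
    qed
    moreover have "abs2 ((X m - X n) * Y n) < e"
    proof -
      have "abs2 ((X m - X n) * Y n) \<le> abs2 (X m - X n) * By"
        using By that abs2_nonneg unfolding abs2_mult N_def by (simp add: mult_left_mono)
      also have "\<dots> < e"
        using N1 that By(1) unfolding N_def by (simp add: pos_less_divide_eq)
      finally show ?thesis .
    qed
    moreover have "X m * Y m - X n * Y n = X m * (Y m - Y n) + (X m - X n) * Y n"
      by (simp add: algebra_simps)
    ultimately show ?thesis
      using abs2_ultrametric[of "X m * (Y m - Y n)" "(X m - X n) * Y n"] by simp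
  qed
  then show "\<exists>N. \<forall>m\<ge>N. \<forall>n\<ge>N. abs2 (X m * Y m - X n * Y n) < e" by blast
qed

lemma cauchy2_power: "cauchy2 X \<Longrightarrow> cauchy2 (\<lambda>m. X m ^ k)"
  by (induction k) (simp_all add: cauchy2_const cauchy2_mult)

lemma cauchy2_fmap:
  assumes "cauchy2 T" "cauchy2 Z"
  shows "cauchy2 (\<lambda>m. fmap (T m) (Z m))"
  unfolding fmap_def using assms
  by (intro cauchy2_add cauchy2_mult cauchy2_power cauchy2_const)

lemma cauchy2_orbit_pt: "cauchy2 T \<Longrightarrow> cauchy2 (orbit_pt T z0 k)"
  by (induction k) (simp_all add: orbit_pt_def cauchy2_const cauchy2_fmap)

lemma cauchy2_abs2_tendsto_qnorm:
  assumes "cauchy2 X"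
  shows "(\<lambda>m. abs2 (X m)) \<longlonglongrightarrow> qnorm X"
proof -
  have "Cauchy (\<lambda>m. abs2 (X m))"
  proof (rule metric_CauchyI)
    fix e :: real assume "e > 0"
    then obtain N where "\<forall>m\<ge>N. \<forall>n\<ge>N. abs2 (X m - X n) < e"
      using assms unfolding cauchy2_def by blast
    then have "\<forall>m\<ge>N. \<forall>n\<ge>N. dist (abs2 (X m)) (abs2 (X n)) < e"
      using abs2_diff_abs2_le unfolding dist_real_def by (blast intro: le_less_trans)
    then show "\<exists>N. \<forall>m\<ge>N. \<forall>n\<ge>N. dist (abs2 (X m)) (abs2 (X n)) < e" ..
  qed
  then show ?thesis
    unfolding qnorm_def by (rule Cauchy_convergent[THEN convergent_LIMSEQ_iff[THEN iffD1]])
qed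

lemma qnorm_le_of_eventually_le:
  assumes "cauchy2 X" "\<forall>m\<ge>N. abs2 (X m) \<le> B"
  shows "qnorm X \<le> B"
  using LIMSEQ_le_const2[OF cauchy2_abs2_tendsto_qnorm[OF assms(1)]] assms(2) by blast

lemma eventually_abs2_le_of_qnorm_le:
  assumes "cauchy2 X" "qnorm X \<le> 2 powr (- of_int j)"
  shows "\<exists>N. \<forall>m\<ge>N. abs2 (X m) \<le> 2 powr (- of_int j)"
proof -
  have "(2::real) powr (- of_int j) < 2 powr (1 - of_int j)" by simp
  then have "qnorm X < 2 powr (1 - of_int j)" using assms(2) by linarith
  with cauchy2_abs2_tendsto_qnorm[OF assms(1)]
  have "\<forall>\<^sub>F m in sequentially. abs2 (X m) < 2 powr (1 - of_int j)"
    by (rule order_tendstoD(2))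
  then show ?thesis
    unfolding eventually_sequentially using abs2_le_of_less_double by blast
qed

section \<open>The orbit of the critical point 1\<close>

definition trap :: "rat set" where
  "trap = (\<lambda>y. 2 + 4 * y) ` Z2 \<union> (\<lambda>y. 3 + 4 * y) ` Z2
        \<union> (\<lambda>y. (19 + 32 * y) / 2) ` Z2 \<union> (\<lambda>y. (27 + 32 * y) / 2) ` Z2"

lemma trap_half_integral: "z \<in> trap \<Longrightarrow> 2 * z \<in> Z2"
  unfolding trap_def by (elim UnE imageE) (simp_all add: Z2_add Z2_mult mult.commute[of 2])

lemma trap_invariant:
  assumes s: "s \<in> Z2" and z: "z \<in> trap"
  shows "fmap (1 + 32 * s) z \<in> trap"
proof -
  let ?t = "1 + 32 * s"
  from z consider (A) y where "y \<in> Z2" "z = 2 + 4 * y" | (B) y where "y \<in> Z2" "z = 3 + 4 * y"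
    | (C) y where "y \<in> Z2" "z = (19 + 32 * y) / 2" | (D) y where "y \<in> Z2" "z = (27 + 32 * y) / 2"
    unfolding trap_def by blast
  then show ?thesis
  proof cases
    case (A y)
    have "fmap ?t z = 3 + 4 * (1 + 48*s + 576*s*y + 1728*s*y^2 + 1536*s*y^3 + 18*y + 54*y^2 + 48*y^3)"
      unfolding fmap_def A(2) by (simp add: field_simps power2_eq_square power3_eq_cube)
    moreover have "1 + 48*s + 576*s*y + 1728*s*y^2 + 1536*s*y^3 + 18*y + 54*y^2 + 48*y^3 \<in> Z2"
      using s A(1) by (intro Z2_intros)
    ultimately show ?thesis unfolding trap_def by blast
  next
    case (B y)
    from B(1) show ?thesis
    proof (cases rule: Z2_parityE)
      case (even w)
      have "fmap ?t z = (19 + 32 * (2 + 81*s + 864*s*w + 2880*s*w^2 + 3072*s*w^3 + 27*w + 90*w^2 + 96*w^3)) / 2"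
        unfolding fmap_def B(2) even(2) by (simp add: field_simps power2_eq_square power3_eq_cube)
      moreover have "2 + 81*s + 864*s*w + 2880*s*w^2 + 3072*s*w^3 + 27*w + 90*w^2 + 96*w^3 \<in> Z2"
        using s even(1) by (intro Z2_intros)
      ultimately show ?thesis unfolding trap_def by blast
    next
      case (odd w)
      have "fmap ?t z = (19 + 32 * (50 + 1617*s + 6048*s*w + 7488*s*w^2 + 3072*s*w^3 + 189*w + 234*w^2 + 96*w^3)) / 2"
        unfolding fmap_def B(2) odd(2) by (simp add: field_simps power2_eq_square power3_eq_cube)
      moreover have "50 + 1617*s + 6048*s*w + 7488*s*w^2 + 3072*s*w^3 + 189*w + 234*w^2 + 96*w^3 \<in> Z2"
        using s odd(1) by (intro Z2_intros)
      ultimately show ?thesis unfolding trap_def by blast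
    qed
  next
    case (C y)
    have "fmap ?t z = 3 + 4 * (541 + 17328*s + 93024*s*y + 165888*s*y^2 + 98304*s*y^3 + 2907*y + 5184*y^2 + 3072*y^3)"
      unfolding fmap_def C(2) by (simp add: field_simps power2_eq_square power3_eq_cube)
    moreover have "541 + 17328*s + 93024*s*y + 165888*s*y^2 + 98304*s*y^3 + 2907*y + 5184*y^2 + 3072*y^3 \<in> Z2"
      using s C(1) by (intro Z2_intros)
    ultimately show ?thesis unfolding trap_def by blast
  next
    case (D y)
    have "fmap ?t z = 2 + 4 * (1640 + 52488*s + 194400*s*y + 239616*s*y^2 + 98304*s*y^3 + 6075*y + 7488*y^2 + 3072*y^3)"
      unfolding fmap_def D(2) by (simp add: field_simps power2_eq_square power3_eq_cube)
    moreover have "1640 + 52488*s + 194400*s*y + 239616*s*y^2 + 98304*s*y^3 + 6075*y + 7488*y^2 + 3072*y^3 \<in> Z2"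
      using s D(1) by (intro Z2_intros)
    ultimately show ?thesis unfolding trap_def by blast
  qed
qed

definition five_or_seven_mod8 :: "rat set" where
  "five_or_seven_mod8 = (\<lambda>x. 5 + 8 * x) ` Z2 \<union> (\<lambda>x. 7 + 8 * x) ` Z2"

lemma five_or_seven_mod8_Z2: "e \<in> five_or_seven_mod8 \<Longrightarrow> e \<in> Z2"
  unfolding five_or_seven_mod8_def by (auto intro!: Z2_intros)

lemma five_or_seven_mod8_triple:
  assumes e: "e \<in> five_or_seven_mod8" and X: "X \<in> Z2"
  shows "3 * e + 8 * X \<in> five_or_seven_mod8"
proof -
  from e obtain x where x: "x \<in> Z2" "e = 5 + 8 * x \<or> e = 7 + 8 * x"
    unfolding five_or_seven_mod8_def by blast
  then have "3 * e + 8 * X = 7 + 8 * (1 + 3 * x + X) \<or> 3 * e + 8 * X = 5 + 8 * (2 + 3 * x + X)"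
    by auto
  moreover have "1 + 3 * x + X \<in> Z2" "2 + 3 * x + X \<in> Z2" using x(1) X by (auto intro!: Z2_intros)
  ultimately show ?thesis unfolding five_or_seven_mod8_def by blast
qed

lemma minus_half_in_trap: "e \<in> five_or_seven_mod8 \<Longrightarrow> - 1 / 2 + 2 * e \<in> trap"
  unfolding five_or_seven_mod8_def trap_def
  by (auto simp: field_simps intro: rev_image_eqI)

lemma fmap_near_minus_half:
  "fmap t (- 1 / 2 + h) = - 1 / 2 - 3 / 2 * (t - 1) + 27 / 4 * t * h - 9 * t * h ^ 2 + 3 * t * h ^ 3"
  unfolding fmap_def by (simp add: field_simps power2_eq_square power3_eq_cube)

lemma orbit_of_one_transient:
  assumes n: "2 \<le> n" and a: "a \<in> five_or_seven_mod8" and t: "t = 1 + 4 ^ n * a"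
    and k: "2 \<le> k" "k \<le> n"
  shows "\<exists>e \<in> five_or_seven_mod8. (fmap t ^^ k) 1 = - 1 / 2 + 2 * 4 ^ (n - k) * e"
  using k
proof (induction k rule: dec_induct)
  case base
  define P :: rat where "P = 4 ^ (n - 2)"
  have "n = (n - 2) + 2" using n by simp
  then have "(4::rat) ^ n = P * 4 ^ 2" unfolding P_def by (metis power_add)
  then have t: "t = 1 + 16 * P * a" unfolding t by simp
  define X where "X = - 12 * a - 162 * P * a ^ 2 - 324 * t * P * a ^ 2 - 2592 * t * P ^ 2 * a ^ 3"
  have "fmap t 1 = - 1 / 2 + (- 24 * P * a)" unfolding fmap_def t by (simp add: field_simps)
  then have "(fmap t ^^ 2) 1 = fmap t (- 1 / 2 + (- 24 * P * a))" by (simp add: numeral_2_eq_2)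
  also have "\<dots> = - 1 / 2 + 2 * P * (3 * a + 8 * X)"
    unfolding X_def fmap_near_minus_half t by (simp add: field_simps power2_eq_square power3_eq_cube)
  finally have "(fmap t ^^ 2) 1 = - 1 / 2 + 2 * P * (3 * a + 8 * X)" .
  moreover have "X \<in> Z2"
    using five_or_seven_mod8_Z2[OF a] unfolding X_def t P_def by (intro Z2_intros)
  ultimately show ?case using five_or_seven_mod8_triple[OF a] unfolding P_def by blast
next
  case (step k)
  then obtain e where e: "e \<in> five_or_seven_mod8" "(fmap t ^^ k) 1 = - 1 / 2 + 2 * 4 ^ (n - k) * e"
    by auto
  define P :: rat where "P = 4 ^ (n - Suc k)"
  define Q :: rat where "Q = 4 ^ (k - 2)"
  have "n - k = n - Suc k + 1" "n = (n - Suc k) + (k - 2) + 3" using step by simp_all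
  then have P4: "(4::rat) ^ (n - k) = 4 * P" and "(4::rat) ^ n = P * Q * 4 ^ 3"
    unfolding P_def Q_def by (metis power_add power_one_right mult.commute)+
  then have t: "t = 1 + 64 * P * Q * a" unfolding t by simp
  define X where "X = - 6 * Q * a + 3 * e + 216 * P * Q * a * e - 36 * t * P * e ^ 2
    + 96 * t * P ^ 2 * e ^ 3"
  have "(fmap t ^^ Suc k) 1 = fmap t (- 1 / 2 + 8 * P * e)"
    using e(2) unfolding P4 by (simp add: mult.assoc)
  also have "\<dots> = - 1 / 2 + 2 * P * (3 * e + 8 * X)"
    unfolding X_def fmap_near_minus_half t by (simp add: field_simps power2_eq_square power3_eq_cube)
  finally have "(fmap t ^^ Suc k) 1 = - 1 / 2 + 2 * 4 ^ (n - Suc k) * (3 * e + 8 * X)"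
    unfolding P_def .
  moreover have "X \<in> Z2"
    using five_or_seven_mod8_Z2[OF a] five_or_seven_mod8_Z2[OF e(1)] unfolding X_def t P_def Q_def
    by (intro Z2_intros)
  ultimately show ?case using five_or_seven_mod8_triple[OF e(1)] by blast
qed

lemma orbit_of_one_in_trap:
  assumes n: "3 \<le> n" and a: "a \<in> five_or_seven_mod8" and t: "t = 1 + 4 ^ n * a"
    and k: "n \<le> k"
  shows "(fmap t ^^ k) 1 \<in> trap"
  using k
proof (induction k rule: dec_induct)
  case base
  then show ?case using orbit_of_one_transient[OF _ a t, of n] n minus_half_in_trap by auto
next
  case (step k)
  have "n = (n - 3) + 3" using n by simp
  then have "(4::rat) ^ n = 4 ^ (n - 3) * 4 ^ 3" by (metis power_add)
  then have "t = 1 + 32 * (2 * 4 ^ (n - 3) * a)" unfolding t by simp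
  moreover have "2 * 4 ^ (n - 3) * a \<in> Z2" using five_or_seven_mod8_Z2[OF a] by (intro Z2_intros)
  ultimately have "fmap t ((fmap t ^^ k) 1) \<in> trap" using trap_invariant[OF _ step.IH] by metis
  then show ?case by simp
qed

lemma orbit_of_one_half_integral:
  assumes n: "3 \<le> n" and a: "a \<in> five_or_seven_mod8" and t: "t = 1 + 4 ^ n * a"
  shows "2 * (fmap t ^^ k) 1 \<in> Z2"
proof -
  have aZ: "a \<in> Z2" using five_or_seven_mod8_Z2[OF a] .
  consider "k = 0" | "k = 1" | "2 \<le> k" "k \<le> n" | "n \<le> k" by linarith
  then show ?thesis
  proof cases
    case 2
    have "2 * fmap t 1 = - 1 - 3 * 4 ^ n * a" unfolding fmap_def t by (simp add: field_simps)
    then show ?thesis using 2 aZ by (simp add: Z2_intros)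
  next
    case 3
    then obtain e where "e \<in> five_or_seven_mod8" "(fmap t ^^ k) 1 = - 1 / 2 + 2 * 4 ^ (n - k) * e"
      using orbit_of_one_transient[OF _ a t] n by auto
    then have "2 * (fmap t ^^ k) 1 = - 1 + 4 * 4 ^ (n - k) * e" "e \<in> Z2"
      using five_or_seven_mod8_Z2 by (auto simp: field_simps)
    then show ?thesis by (simp add: Z2_intros)
  qed (simp_all add: trap_half_integral orbit_of_one_in_trap[OF n a t])
qed

lemma disk_parametrisation:
  fixes c t :: rat
  assumes c: "c = 5 \<or> c = 7"
    and disk: "abs2 (t - (1 + c * 2 ^ (2 * n))) \<le> 2 powr (- real (2 * n + 3))"
  shows "\<exists>a \<in> five_or_seven_mod8. t = 1 + 4 ^ n * a"
proof -
  define r where "r = (t - (1 + c * 2 ^ (2 * n))) * 2 powi (- int (2 * n + 3))"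
  have "r \<in> Z2" using disk abs2_le_iff_Z2[of _ "int (2 * n + 3)"] unfolding r_def by simp
  have "(2::rat) powi (- int (2 * n + 3)) = 1 / 2 ^ (2 * n + 3)"
    by (simp only: power_int_minus_divide power_int_of_nat)
  also have "\<dots> = 1 / (8 * 4 ^ n)" by (simp add: power_add power_mult)
  finally have p: "(2::rat) powi (- int (2 * n + 3)) = 1 / (8 * 4 ^ n)" .
  have "(2::rat) ^ (2 * n) = 4 ^ n" by (simp add: power_mult)
  then have "t = 1 + 4 ^ n * (c + 8 * r)" unfolding r_def p by (simp add: field_simps)
  moreover have "c + 8 * r \<in> five_or_seven_mod8"
    using c \<open>r \<in> Z2\<close> unfolding five_or_seven_mod8_def by auto
  ultimately show ?thesis by blast
qed

lemma critical_orbit_bounded: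
  fixes c t :: rat
  assumes n: "3 \<le> n" and c: "c = 5 \<or> c = 7"
    and disk: "abs2 (t - (1 + c * 2 ^ (2 * n))) \<le> 2 powr (- real (2 * n + 3))"
    and z0: "z0 = 0 \<or> z0 = 1"
  shows "abs2 ((fmap t ^^ k) z0) \<le> 2"
proof -
  obtain a where a: "a \<in> five_or_seven_mod8" and t: "t = 1 + 4 ^ n * a"
    using disk_parametrisation[OF c disk] by blast
  have one: "abs2 ((fmap t ^^ k) 1) \<le> 2" for k
    unfolding abs2_le_2_iff by (rule orbit_of_one_half_integral[OF n a t])
  have "fmap t 0 = 1" unfolding fmap_def by simp
  then have "abs2 ((fmap t ^^ k) 0) \<le> 2"
    using one by (cases k) (simp_all only: funpow_Suc_right comp_def funpow_0, simp_all)
  then show ?thesis using z0 one by blast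
qed

theorem mainTheorem5:
  fixes T :: "nat \<Rightarrow> rat" and n :: nat
  assumes "cauchy2 T" and "n \<ge> 3"
    and "qnorm (\<lambda>m. T m - (1 + 5 * 2 ^ (2 * n))) \<le> 2 powr (- real (2 * n + 3))
       \<or> qnorm (\<lambda>m. T m - (1 + 7 * 2 ^ (2 * n))) \<le> 2 powr (- real (2 * n + 3))"
  shows "post_crit_bounded T"
proof -
  obtain c :: rat where c: "c = 5 \<or> c = 7"
    and disk: "qnorm (\<lambda>m. T m - (1 + c * 2 ^ (2 * n))) \<le> 2 powr (- of_int (int (2 * n + 3)))"
    using assms(3) by auto
  have "cauchy2 (\<lambda>m. T m - (1 + c * 2 ^ (2 * n)))"
    using assms(1) by (intro cauchy2_diff cauchy2_const)
  then obtain N where N: "\<forall>m\<ge>N. abs2 (T m - (1 + c * 2 ^ (2 * n))) \<le> 2 powr (- real (2 * n + 3))"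
    using eventually_abs2_le_of_qnorm_le[OF _ disk] by auto
  have orbit_bound: "\<forall>m\<ge>N. abs2 (orbit_pt T z0 k m) \<le> 2" if "z0 = 0 \<or> z0 = 1" for z0 k
  proof (intro allI impI)
    fix m assume "m \<ge> N"
    then have "abs2 (T m - (1 + c * 2 ^ (2 * n))) \<le> 2 powr (- real (2 * n + 3))" using N by blast
    from critical_orbit_bounded[OF assms(2) c this that]
    show "abs2 (orbit_pt T z0 k m) \<le> 2" unfolding orbit_pt_def .
  qed
  have "qnorm (orbit_pt T z0 k) \<le> 2" if "z0 = 0 \<or> z0 = 1" for z0 k
    by (rule qnorm_le_of_eventually_le[OF cauchy2_orbit_pt[OF assms(1)] orbit_bound[OF that]])
  then show ?thesis unfolding post_crit_bounded_def bounded_orbit_def by (intro conjI exI[of _ 2]) auto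
qed

end
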